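(* Let $X$ be a bounded geometry metric space that does not have the operator norm localization property. Then there exist $R>0$, $\kappa<1$, a sequence $(T_n)$ of operators in $\mathbb{C}_R[X]$, a sequence $(B_n)$ of finite subsets of $X$, and a sequence $(S_n)$ of positive real numbers such that: (a) $(S_n)$ is increasing and $S_n\to\infty$; (b) each $T_n$ is positive and of norm one; (c) $B_n\cap B_m=\emptyset$ for $n\ne m$; (d) if $P_n:\ell^2(X)\to\ell^2(B_n)$ is the orthogonal projection, then $P_nT_nP_n=T_n$; (e) for each $n$ and every $\xi\in\ell^2(X)$ with $\|\xi\|=1$ and $\operatorname{diam}(\operatorname{Supp}(\xi))\le S_n$, one has $\|T_n\xi\|\le\kappa$.
   Context: A metric space $X$ has bounded geometry if for each $R>0$ there is $N$ such that every ball of radius $R$ contains at most $N$ points. With $\{\delta_x\}$ the standard basis of $\ell^2(X)$ and $T_{xy}=\langle\delta_x,T\delta_y\rangle$, the propagation of a bounded operator $T$ is $\sup\{d(x,y):T_{xy}\neq0\}$, and $\mathbb{C}_R[X]$ is the set of bounded operators on $\ell^2(X)$ of propagation at most $R$. $X$ has the operator norm localization property (ONL) if for all $R\ge0$ and $c\in(0,1)$ there exists $S>0$ such that for every $T\in\mathbb{C}_R[X]$ of norm one there is $\xi\in\ell^2(X)$ of norm one with $\operatorname{diam}(\operatorname{Supp}(\xi))\le S$ and $\|T\xi\|\ge c$. *)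

theory Defs
  imports "HOL-Analysis.Analysis"
begin

text \<open>The metric space X is the carrier UNIV of a type 'a :: metric_space.
  A bounded operator T on l2(X) is represented by its matrix
  T x y = <delta_x, T delta_y>; it acts by (T xi)(x) = sum_y T x y * xi y.\<close>

definition bounded_geometry :: "'a::metric_space itself \<Rightarrow> bool" where
  "bounded_geometry _ \<longleftrightarrow>
     (\<forall>R>0. \<exists>N::nat. \<forall>x::'a. finite (cball x R) \<and> card (cball x R) \<le> N)"

definition l2 :: "('a \<Rightarrow> complex) \<Rightarrow> bool" where
  "l2 \<xi> \<longleftrightarrow> (\<lambda>x. (cmod (\<xi> x))\<^sup>2) summable_on UNIV"

definition l2norm :: "('a \<Rightarrow> complex) \<Rightarrow> real" where
  "l2norm \<xi> = sqrt (\<Sum>\<^sub>\<infinity>x. (cmod (\<xi> x))\<^sup>2)"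

definition l2inner :: "('a \<Rightarrow> complex) \<Rightarrow> ('a \<Rightarrow> complex) \<Rightarrow> complex" where
  "l2inner \<xi> \<eta> = (\<Sum>\<^sub>\<infinity>x. cnj (\<xi> x) * \<eta> x)"

definition supp :: "('a \<Rightarrow> complex) \<Rightarrow> 'a set" where
  "supp \<xi> = {x. \<xi> x \<noteq> 0}"

text \<open>diam(A) \<le> S, written out (avoids junk values of diameter on unbounded sets).\<close>
definition diam_le :: "'a::metric_space set \<Rightarrow> real \<Rightarrow> bool" where
  "diam_le A S \<longleftrightarrow> (\<forall>x\<in>A. \<forall>y\<in>A. dist x y \<le> S)"

definition op_apply :: "('a \<Rightarrow> 'a \<Rightarrow> complex) \<Rightarrow> ('a \<Rightarrow> complex) \<Rightarrow> ('a \<Rightarrow> complex)" where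
  "op_apply T \<xi> = (\<lambda>x. \<Sum>\<^sub>\<infinity>y. T x y * \<xi> y)"

definition bounded_op :: "('a \<Rightarrow> 'a \<Rightarrow> complex) \<Rightarrow> bool" where
  "bounded_op T \<longleftrightarrow>
     (\<forall>\<xi>. l2 \<xi> \<longrightarrow> (\<forall>x. (\<lambda>y. T x y * \<xi> y) summable_on UNIV) \<and> l2 (op_apply T \<xi>)) \<and>
     (\<exists>C. \<forall>\<xi>. l2 \<xi> \<longrightarrow> l2norm (op_apply T \<xi>) \<le> C * l2norm \<xi>)"

definition opnorm :: "('a \<Rightarrow> 'a \<Rightarrow> complex) \<Rightarrow> real" where
  "opnorm T = Sup {l2norm (op_apply T \<xi>) | \<xi>. l2 \<xi> \<and> l2norm \<xi> \<le> 1}"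

definition positive_op :: "('a \<Rightarrow> 'a \<Rightarrow> complex) \<Rightarrow> bool" where
  "positive_op T \<longleftrightarrow> bounded_op T \<and>
     (\<forall>\<xi>. l2 \<xi> \<longrightarrow> Im (l2inner \<xi> (op_apply T \<xi>)) = 0 \<and> Re (l2inner \<xi> (op_apply T \<xi>)) \<ge> 0)"

definition propagation_le :: "('a::metric_space \<Rightarrow> 'a \<Rightarrow> complex) \<Rightarrow> real \<Rightarrow> bool" where
  "propagation_le T R \<longleftrightarrow> (\<forall>x y. T x y \<noteq> 0 \<longrightarrow> dist x y \<le> R)"

definition CR :: "real \<Rightarrow> ('a::metric_space \<Rightarrow> 'a \<Rightarrow> complex) set" where
  "CR R = {T. bounded_op T \<and> propagation_le T R}"

definition proj :: "'a set \<Rightarrow> ('a \<Rightarrow> 'a \<Rightarrow> complex)" where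
  "proj B = (\<lambda>x y. if x = y \<and> x \<in> B then 1 else 0)"

definition ONL :: "'a::metric_space itself \<Rightarrow> bool" where
  "ONL _ \<longleftrightarrow>
     (\<forall>R\<ge>0. \<forall>c. 0 < c \<and> c < 1 \<longrightarrow> (\<exists>S>0. \<forall>T::'a \<Rightarrow> 'a \<Rightarrow> complex.
        T \<in> CR R \<and> opnorm T = 1 \<longrightarrow>
        (\<exists>\<xi>. l2 \<xi> \<and> l2norm \<xi> = 1 \<and> diam_le (supp \<xi>) S \<and> l2norm (op_apply T \<xi>) \<ge> c)))"

end

theory Submission
  imports Defs
begin

text \<open>
  Failure of ONL provides R \<ge> 0, c < 1 and, for every S, a norm-one operator T of propagation
  at most R that maps unit vectors supported in sets of diameter at most S to vectors of norm
  below c. To find an operator away from a finite set F, take such a T for a very large S and a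
  finitely supported \<zeta> with \<parallel>\<zeta>\<parallel> \<le> 1 and \<parallel>T \<zeta>\<parallel>^2 \<ge> t + 1/M, where t = (1 + c)/2 > c^2.
  One of M concentric shells of width 4(R + 1) around F carries at most 1/M of the mass of \<zeta>.
  Cutting \<zeta> along it, T shrinks the inner piece by c, since its support has diameter at most S,
  so the outer piece \<xi>0, which lives R-far from F, satisfies \<parallel>T \<xi>0\<parallel>^2 \<ge> t \<parallel>\<xi>0\<parallel>^2.
  Compressing T to a finite B \<supseteq> supp \<xi>0 \<union> supp (T \<xi>0) disjoint from F gives a contraction A
  with \<parallel>A\<parallel>^2 \<ge> t, and K = A* A / \<parallel>A* A\<parallel> is positive, of norm one, supported in B, of propagation
  at most 2R, and shrinks unit vectors of small support by c/t < 1. Choosing each B n away from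
  the earlier ones makes them pairwise disjoint.
\<close>

section \<open>Finitely supported vectors\<close>

definition restrict_vec :: "'a set \<Rightarrow> ('a \<Rightarrow> complex) \<Rightarrow> 'a \<Rightarrow> complex" where
  "restrict_vec B v = (\<lambda>x. if x \<in> B then v x else 0)"

definition sqnorm_on :: "'a set \<Rightarrow> ('a \<Rightarrow> complex) \<Rightarrow> real" where
  "sqnorm_on A v = (\<Sum>x\<in>A. (cmod (v x))\<^sup>2)"

lemma infsum_eq_sum_if_vanishing_outside:
  fixes f :: "'a \<Rightarrow> 'b::{comm_monoid_add,t2_space}"
  assumes "finite A" "\<And>x. x \<notin> A \<Longrightarrow> f x = 0"
  shows "infsum f UNIV = sum f A"
proof -
  have "infsum f UNIV = infsum f A"
    by (rule infsum_cong_neutral) (use assms in auto)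
  then show ?thesis using assms(1) by simp
qed

lemma summable_on_if_vanishing_outside:
  fixes f :: "'a \<Rightarrow> 'b::{comm_monoid_add,t2_space}"
  assumes "finite A" "\<And>x. x \<notin> A \<Longrightarrow> f x = 0"
  shows "f summable_on UNIV"
proof -
  have "f summable_on UNIV \<longleftrightarrow> f summable_on A"
    by (rule summable_on_cong_neutral) (use assms in auto)
  then show ?thesis using assms(1) by simp
qed

lemma sqnorm_on_nonneg: "0 \<le> sqnorm_on A v"
  unfolding sqnorm_on_def by (simp add: sum_nonneg)

lemma sqnorm_on_mono: "finite B \<Longrightarrow> A \<subseteq> B \<Longrightarrow> sqnorm_on A v \<le> sqnorm_on B v"
  unfolding sqnorm_on_def by (rule sum_mono2) auto

lemma sqnorm_on_diff: "finite A \<Longrightarrow> B \<subseteq> A \<Longrightarrow> sqnorm_on (A - B) v = sqnorm_on A v - sqnorm_on B v"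
  unfolding sqnorm_on_def by (rule sum_diff)

lemma sqnorm_on_restrict_vec: "finite A \<Longrightarrow> sqnorm_on A (restrict_vec B v) = sqnorm_on (A \<inter> B) v"
  unfolding sqnorm_on_def restrict_vec_def by (simp add: sum.inter_restrict) (intro sum.cong, auto)

lemma sqnorm_on_add_le:
  assumes "finite V" "\<And>x. x \<notin> Z \<Longrightarrow> a x = 0 \<or> b x = 0"
  shows "sqnorm_on V (\<lambda>x. a x + b x)
           \<le> sqnorm_on V a + sqnorm_on V b + (sqnorm_on (V \<inter> Z) a + sqnorm_on (V \<inter> Z) b)"
proof -
  have pointwise: "(cmod (a x + b x))\<^sup>2 \<le> (cmod (a x))\<^sup>2 + (cmod (b x))\<^sup>2 +
      ((if x \<in> Z then (cmod (a x))\<^sup>2 else 0) + (if x \<in> Z then (cmod (b x))\<^sup>2 else 0))" for x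
  proof (cases "x \<in> Z")
    case True
    have "(cmod (a x + b x))\<^sup>2 \<le> (cmod (a x) + cmod (b x))\<^sup>2"
      by (rule power_mono[OF norm_triangle_ineq]) simp
    also have "\<dots> \<le> 2 * (cmod (a x))\<^sup>2 + 2 * (cmod (b x))\<^sup>2"
      using zero_le_power2[of "cmod (a x) - cmod (b x)"] unfolding power2_sum power2_diff by linarith
    finally show ?thesis using True by simp
  next
    case False
    then show ?thesis using assms(2)[of x] by auto
  qed
  have "sqnorm_on V (\<lambda>x. a x + b x) \<le> (\<Sum>x\<in>V. (cmod (a x))\<^sup>2 + (cmod (b x))\<^sup>2 +
      ((if x \<in> Z then (cmod (a x))\<^sup>2 else 0) + (if x \<in> Z then (cmod (b x))\<^sup>2 else 0)))"
    unfolding sqnorm_on_def by (rule sum_mono) (rule pointwise)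
  also have "\<dots> = sqnorm_on V a + sqnorm_on V b + (sqnorm_on (V \<inter> Z) a + sqnorm_on (V \<inter> Z) b)"
    unfolding sqnorm_on_def sum.distrib sum.inter_restrict[OF assms(1)] by simp
  finally show ?thesis .
qed

lemma l2norm_nonneg: "0 \<le> l2norm v"
  unfolding l2norm_def by (simp add: infsum_nonneg)

lemma l2_if_finite_supp:
  assumes "finite A" "supp v \<subseteq> A"
  shows "l2 v"
  unfolding l2_def by (rule summable_on_if_vanishing_outside[OF assms(1)]) (use assms(2) in \<open>auto simp: supp_def\<close>)

lemma l2norm_sq_finite_supp:
  assumes "finite A" "supp v \<subseteq> A"
  shows "(l2norm v)\<^sup>2 = sqnorm_on A v"
proof -
  have "(\<Sum>\<^sub>\<infinity>x. (cmod (v x))\<^sup>2) = sqnorm_on A v"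
    unfolding sqnorm_on_def
    by (rule infsum_eq_sum_if_vanishing_outside[OF assms(1)]) (use assms(2) in \<open>auto simp: supp_def\<close>)
  then show ?thesis unfolding l2norm_def by (simp add: sqnorm_on_nonneg)
qed

lemma sqnorm_on_le_l2norm_sq:
  assumes "l2 v" "finite K"
  shows "sqnorm_on K v \<le> (l2norm v)\<^sup>2"
proof -
  have "sqnorm_on K v \<le> (\<Sum>\<^sub>\<infinity>x. (cmod (v x))\<^sup>2)" unfolding sqnorm_on_def
    by (rule finite_sum_le_infsum) (use assms in \<open>auto simp: l2_def\<close>)
  then show ?thesis unfolding l2norm_def by (simp add: infsum_nonneg)
qed

lemma l2_zero: "l2 (\<lambda>x. 0)" and l2norm_zero: "l2norm (\<lambda>x. 0) = 0"
  by (simp_all add: l2_def l2norm_def)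

lemma supp_restrict_vec: "supp (restrict_vec B v) = B \<inter> supp v"
  by (auto simp: supp_def restrict_vec_def)

lemma restrict_vec_eq_self: "supp v \<subseteq> B \<Longrightarrow> restrict_vec B v = v"
  unfolding restrict_vec_def supp_def by (rule ext) auto

lemma l2_restrict_vec: "finite B \<Longrightarrow> l2 (restrict_vec B v)"
  by (rule l2_if_finite_supp) (auto simp: supp_restrict_vec)

lemma l2norm_restrict_vec_le:
  assumes "l2 v" "finite B"
  shows "l2norm (restrict_vec B v) \<le> l2norm v"
proof -
  have "(l2norm (restrict_vec B v))\<^sup>2 = sqnorm_on B v"
    using l2norm_sq_finite_supp[OF assms(2), of "restrict_vec B v"]
    by (simp add: supp_restrict_vec sqnorm_on_restrict_vec assms(2))
  also have "\<dots> \<le> (l2norm v)\<^sup>2" by (rule sqnorm_on_le_l2norm_sq[OF assms])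
  finally show ?thesis using l2norm_nonneg[of v] by (rule power2_le_imp_le)
qed

lemma l2_divide:
  assumes "l2 v" shows "l2 (\<lambda>x. v x / s)"
proof -
  have "(\<lambda>x. (cmod (v x))\<^sup>2 * (1 / (cmod s)\<^sup>2)) summable_on UNIV"
    using assms unfolding l2_def by (rule summable_on_cmult_left)
  then show ?thesis unfolding l2_def by (simp add: norm_divide power_divide)
qed

lemma l2norm_divide: "l2norm (\<lambda>x. v x / s) = l2norm v / cmod s"
proof -
  have "(\<Sum>\<^sub>\<infinity>x. (cmod (v x / s))\<^sup>2) = (\<Sum>\<^sub>\<infinity>x. (cmod (v x))\<^sup>2 * (1 / (cmod s)\<^sup>2))"
    by (simp add: norm_divide power_divide)
  also have "\<dots> = (\<Sum>\<^sub>\<infinity>x. (cmod (v x))\<^sup>2) * (1 / (cmod s)\<^sup>2)"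
    by (rule infsum_cmult_left')
  finally show ?thesis unfolding l2norm_def by (simp add: real_sqrt_mult real_sqrt_divide)
qed

lemma cauchy_schwarz_finite_supp:
  assumes "finite B" "supp v \<subseteq> B" "l2 u"
  shows "cmod (\<Sum>x\<in>B. cnj (u x) * v x) \<le> l2norm u * l2norm v"
proof -
  have L2_eq: "L2_set (\<lambda>x. cmod (w x)) B = sqrt (sqnorm_on B w)" for w
    unfolding L2_set_def sqnorm_on_def ..
  have "cmod (\<Sum>x\<in>B. cnj (u x) * v x) \<le> (\<Sum>x\<in>B. \<bar>cmod (u x)\<bar> * \<bar>cmod (v x)\<bar>)"
    using norm_sum[of "\<lambda>x. cnj (u x) * v x" B] by (simp add: norm_mult)
  also have "\<dots> \<le> L2_set (\<lambda>x. cmod (u x)) B * L2_set (\<lambda>x. cmod (v x)) B"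
    by (rule L2_set_mult_ineq)
  also have "\<dots> \<le> l2norm u * l2norm v"
  proof (rule mult_mono)
    show "L2_set (\<lambda>x. cmod (u x)) B \<le> l2norm u"
      unfolding L2_eq using real_sqrt_le_mono[OF sqnorm_on_le_l2norm_sq[OF assms(3,1)]]
      by (simp add: l2norm_nonneg)
    show "L2_set (\<lambda>x. cmod (v x)) B \<le> l2norm v"
      unfolding L2_eq l2norm_sq_finite_supp[OF assms(1,2), symmetric] by (simp add: l2norm_nonneg)
  qed (auto simp: l2norm_nonneg)
  finally show ?thesis .
qed

lemma l2inner_finite_supp:
  assumes "finite B" "supp v \<subseteq> B"
  shows "l2inner u v = (\<Sum>x\<in>B. cnj (u x) * v x)"
  unfolding l2inner_def
  by (rule infsum_eq_sum_if_vanishing_outside) (use assms in \<open>auto simp: supp_def\<close>)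

lemma diam_le_subset: "diam_le A S \<Longrightarrow> A' \<subseteq> A \<Longrightarrow> diam_le A' S"
  unfolding diam_le_def by blast

lemma diam_le_mono: "diam_le A S \<Longrightarrow> S \<le> S' \<Longrightarrow> diam_le A S'"
  unfolding diam_le_def by force

section \<open>Matrix operators\<close>

lemma op_apply_divide: "op_apply T (\<lambda>x. v x / s) = (\<lambda>x. op_apply T v x / s)"
proof
  fix x
  have "(\<Sum>\<^sub>\<infinity>y. T x y * (v y / s)) = (\<Sum>\<^sub>\<infinity>y. T x y * v y * (1/s))"
    by simp
  also have "\<dots> = (\<Sum>\<^sub>\<infinity>y. T x y * v y) * (1/s)" by (rule infsum_cmult_left')
  finally show "op_apply T (\<lambda>x. v x / s) x = op_apply T v x / s"
    unfolding op_apply_def by simp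
qed

lemma op_apply_divide_matrix: "op_apply (\<lambda>x y. T x y / s) v = (\<lambda>x. op_apply T v x / s)"
proof
  fix x
  have "(\<Sum>\<^sub>\<infinity>y. T x y / s * v y) = (\<Sum>\<^sub>\<infinity>y. T x y * v y * (1/s))"
    by simp
  also have "\<dots> = (\<Sum>\<^sub>\<infinity>y. T x y * v y) * (1/s)" by (rule infsum_cmult_left')
  finally show "op_apply (\<lambda>x y. T x y / s) v x = op_apply T v x / s"
    unfolding op_apply_def by simp
qed

lemma op_apply_eq_sum:
  assumes "finite G" "supp \<xi> \<subseteq> G"
  shows "op_apply T \<xi> = (\<lambda>x. \<Sum>y\<in>G. T x y * \<xi> y)"
  unfolding op_apply_def
  by (rule ext, rule infsum_eq_sum_if_vanishing_outside) (use assms in \<open>auto simp: supp_def\<close>)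

lemma bdd_above_opnorm_set:
  assumes "bounded_op T"
  shows "bdd_above {l2norm (op_apply T \<xi>) | \<xi>. l2 \<xi> \<and> l2norm \<xi> \<le> 1}"
proof -
  obtain C where C: "\<And>\<xi>. l2 \<xi> \<Longrightarrow> l2norm (op_apply T \<xi>) \<le> C * l2norm \<xi>"
    using assms unfolding bounded_op_def by blast
  have "l2norm (op_apply T \<xi>) \<le> \<bar>C\<bar>" if "l2 \<xi>" "l2norm \<xi> \<le> 1" for \<xi>
  proof -
    have "l2norm (op_apply T \<xi>) \<le> \<bar>C\<bar> * l2norm \<xi>"
      using C[OF that(1)] mult_right_mono[OF abs_ge_self l2norm_nonneg, of C \<xi>] by linarith
    also have "\<dots> \<le> \<bar>C\<bar>" using mult_left_mono[OF that(2) abs_ge_zero, of C] by simp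
    finally show ?thesis .
  qed
  then show ?thesis by (intro bdd_aboveI) blast
qed

lemma opnorm_set_nonempty: "{l2norm (op_apply T \<xi>) | \<xi>. l2 \<xi> \<and> l2norm \<xi> \<le> 1} \<noteq> {}"
  by (auto intro!: exI[of _ "\<lambda>_. 0"] simp: l2_zero l2norm_zero)

lemma l2norm_op_apply_le_if_unit:
  assumes "bounded_op T" "l2 \<eta>" "P (supp \<eta>)"
    and unit: "\<And>\<xi>. l2 \<xi> \<Longrightarrow> l2norm \<xi> = 1 \<Longrightarrow> P (supp \<xi>) \<Longrightarrow> l2norm (op_apply T \<xi>) \<le> c"
  shows "l2norm (op_apply T \<eta>) \<le> c * l2norm \<eta>"
proof (cases "l2norm \<eta> = 0")
  case True
  obtain C where "\<And>\<xi>. l2 \<xi> \<Longrightarrow> l2norm (op_apply T \<xi>) \<le> C * l2norm \<xi>"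
    using assms(1) unfolding bounded_op_def by blast
  then show ?thesis using assms(2) True l2norm_nonneg[of "op_apply T \<eta>"] by force
next
  case False
  define s where "s = l2norm \<eta>"
  have s: "s > 0" using False l2norm_nonneg[of \<eta>] s_def by simp
  define \<xi> where "\<xi> = (\<lambda>x. \<eta> x / complex_of_real s)"
  have "l2 \<xi>" unfolding \<xi>_def by (rule l2_divide[OF assms(2)])
  moreover have "l2norm \<xi> = 1" unfolding \<xi>_def l2norm_divide using s s_def by simp
  moreover have "supp \<xi> = supp \<eta>" unfolding \<xi>_def supp_def using s by auto
  ultimately have "l2norm (op_apply T \<xi>) \<le> c" using unit assms(3) by simp
  moreover have "l2norm (op_apply T \<xi>) = l2norm (op_apply T \<eta>) / s"
    unfolding \<xi>_def op_apply_divide l2norm_divide using s by simp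
  ultimately show ?thesis using s unfolding s_def by (simp add: divide_le_eq mult.commute)
qed

lemma l2norm_op_apply_le_opnorm:
  assumes "bounded_op T" "l2 \<xi>"
  shows "l2norm (op_apply T \<xi>) \<le> opnorm T * l2norm \<xi>"
  using assms(1,2)
proof (rule l2norm_op_apply_le_if_unit[where P = "\<lambda>_. True"])
  show "l2norm (op_apply T \<eta>) \<le> opnorm T" if "l2 \<eta>" "l2norm \<eta> = 1" for \<eta>
    unfolding opnorm_def
    by (rule cSup_upper[OF _ bdd_above_opnorm_set[OF assms(1)]]) (use that in auto)
qed simp

lemma opnorm_divide_opnorm:
  assumes "bounded_op C" "opnorm C > 0"
  shows "opnorm (\<lambda>x y. C x y / opnorm C) = 1"
proof -
  define N where "N = opnorm C"
  let ?X = "\<lambda>T. {l2norm (op_apply T \<xi>) | \<xi>. l2 \<xi> \<and> l2norm \<xi> \<le> 1}"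
  have scaled: "?X (\<lambda>x y. C x y / N) = (\<lambda>r. r / N) ` ?X C"
    using assms(2) unfolding N_def op_apply_divide_matrix l2norm_divide by auto
  have "Sup ((\<lambda>r. r / N) ` ?X C) = Sup (?X C) / N"
  proof (rule cSup_eq_non_empty)
    show "(\<lambda>r. r / N) ` ?X C \<noteq> {}" using opnorm_set_nonempty by blast
    show "r \<le> Sup (?X C) / N" if "r \<in> (\<lambda>r. r / N) ` ?X C" for r
    proof -
      obtain q where "q \<in> ?X C" "r = q / N" using \<open>r \<in> _\<close> by blast
      then show ?thesis using assms(2) cSup_upper[OF _ bdd_above_opnorm_set[OF assms(1)]]
        unfolding N_def by (simp add: divide_right_mono)
    qed
    show "Sup (?X C) / N \<le> y" if ub: "\<And>r. r \<in> (\<lambda>r. r / N) ` ?X C \<Longrightarrow> r \<le> y" for y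
    proof -
      have "Sup (?X C) \<le> y * N"
      proof (rule cSup_least[OF opnorm_set_nonempty])
        show "r \<le> y * N" if "r \<in> ?X C" for r
          using ub[of "r / N"] that assms(2) unfolding N_def by (auto simp: divide_le_eq)
      qed
      then show ?thesis using assms(2) unfolding N_def by (simp add: divide_le_eq)
    qed
  qed
  moreover have "opnorm (\<lambda>x y. C x y / N) = Sup ((\<lambda>r. r / N) ` ?X C)"
    unfolding opnorm_def scaled ..
  moreover have "Sup (?X C) = N" unfolding N_def opnorm_def ..
  ultimately show ?thesis using assms(2) unfolding N_def by simp
qed

lemma CR_mono: "R \<le> R' \<Longrightarrow> CR R \<subseteq> CR R'"
  unfolding CR_def propagation_le_def by force

definition supported_matrix :: "'a set \<Rightarrow> ('a \<Rightarrow> 'a \<Rightarrow> complex) \<Rightarrow> bool" where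
  "supported_matrix B K \<longleftrightarrow> finite B \<and> (\<forall>x y. K x y \<noteq> 0 \<longrightarrow> x \<in> B \<and> y \<in> B)"

lemma op_apply_supported_matrix:
  assumes "supported_matrix B K"
  shows "op_apply K \<xi> = (\<lambda>x. \<Sum>y\<in>B. K x y * \<xi> y)"
  unfolding op_apply_def
  by (rule ext, rule infsum_eq_sum_if_vanishing_outside) (use assms in \<open>auto simp: supported_matrix_def\<close>)

lemma supp_op_apply_supported_matrix:
  assumes "supported_matrix B K" shows "supp (op_apply K \<xi>) \<subseteq> B"
proof
  fix x assume "x \<in> supp (op_apply K \<xi>)"
  then have "(\<Sum>y\<in>B. K x y * \<xi> y) \<noteq> 0"
    using op_apply_supported_matrix[OF assms] by (simp add: supp_def)
  then obtain y where "K x y * \<xi> y \<noteq> 0" by (meson sum.neutral)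
  then show "x \<in> B" using assms unfolding supported_matrix_def by auto
qed

lemma l2_op_apply_supported_matrix:
  assumes "supported_matrix B K" shows "l2 (op_apply K \<xi>)"
  using assms supp_op_apply_supported_matrix[OF assms] unfolding supported_matrix_def
  by (metis l2_if_finite_supp)

lemma op_apply_supported_matrix_restrict_vec:
  assumes "supported_matrix B K" shows "op_apply K (restrict_vec B \<xi>) = op_apply K \<xi>"
  unfolding op_apply_supported_matrix[OF assms] restrict_vec_def by (intro ext sum.cong) auto

lemma bounded_op_supported_matrix:
  assumes "supported_matrix B K" "\<And>\<xi>. l2 \<xi> \<Longrightarrow> l2norm (op_apply K \<xi>) \<le> L * l2norm \<xi>"
  shows "bounded_op K"
proof -
  have "(\<lambda>y. K x y * \<xi> y) summable_on UNIV" for x \<xi>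
    by (rule summable_on_if_vanishing_outside) (use assms(1) in \<open>auto simp: supported_matrix_def\<close>)
  then show ?thesis
    unfolding bounded_op_def using l2_op_apply_supported_matrix[OF assms(1)] assms(2) by blast
qed

lemma op_apply_proj: "op_apply (proj B) v = restrict_vec B v"
proof
  fix x
  show "op_apply (proj B) v x = restrict_vec B v x"
    unfolding op_apply_def proj_def restrict_vec_def
    by (subst infsum_eq_sum_if_vanishing_outside[of "{x}"]) auto
qed

lemma proj_compression_supported_matrix:
  assumes "supported_matrix B K"
  shows "op_apply (proj B) (op_apply K (op_apply (proj B) \<xi>)) = op_apply K \<xi>"
  unfolding op_apply_proj op_apply_supported_matrix_restrict_vec[OF assms]
  by (rule restrict_vec_eq_self[OF supp_op_apply_supported_matrix[OF assms]])

definition adjoint :: "('a \<Rightarrow> 'a \<Rightarrow> complex) \<Rightarrow> 'a \<Rightarrow> 'a \<Rightarrow> complex" where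
  "adjoint A = (\<lambda>x y. cnj (A y x))"

text \<open>For A supported in B, this is the matrix of A* A.\<close>
definition gram :: "'a set \<Rightarrow> ('a \<Rightarrow> 'a \<Rightarrow> complex) \<Rightarrow> 'a \<Rightarrow> 'a \<Rightarrow> complex" where
  "gram B A = (\<lambda>x y. \<Sum>z\<in>B. cnj (A z x) * A z y)"

lemma supported_matrix_adjoint: "supported_matrix B A \<Longrightarrow> supported_matrix B (adjoint A)"
  unfolding supported_matrix_def adjoint_def by auto

lemma supported_matrix_gram:
  assumes A: "supported_matrix B A" shows "supported_matrix B (gram B A)"
proof -
  have B: "finite B" using A by (simp add: supported_matrix_def)
  show ?thesis unfolding supported_matrix_def
  proof (intro conjI[OF B] allI impI)
    fix x y assume "gram B A x y \<noteq> 0"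
    then obtain z where "cnj (A z x) * A z y \<noteq> 0" unfolding gram_def by (meson sum.neutral)
    then show "x \<in> B \<and> y \<in> B" using A unfolding supported_matrix_def by auto
  qed
qed

lemma propagation_le_gram:
  assumes "propagation_le A R" shows "propagation_le (gram B A) (2 * R)"
  unfolding propagation_le_def
proof (intro allI impI)
  fix x y assume "gram B A x y \<noteq> 0"
  then obtain z where "cnj (A z x) * A z y \<noteq> 0" unfolding gram_def by (meson sum.neutral)
  then have "dist z x \<le> R" "dist z y \<le> R" using assms unfolding propagation_le_def by auto
  then show "dist x y \<le> 2 * R" using dist_triangle3[of x y z] by linarith
qed

lemma op_apply_gram:
  assumes "supported_matrix B A"
  shows "op_apply (gram B A) \<xi> = op_apply (adjoint A) (op_apply A \<xi>)"
proof (rule ext)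
  fix x
  have "op_apply (adjoint A) (op_apply A \<xi>) x = (\<Sum>z\<in>B. cnj (A z x) * (\<Sum>y\<in>B. A z y * \<xi> y))"
    unfolding op_apply_supported_matrix[OF supported_matrix_adjoint[OF assms]]
      op_apply_supported_matrix[OF assms] by (simp add: adjoint_def)
  also have "\<dots> = (\<Sum>z\<in>B. \<Sum>y\<in>B. cnj (A z x) * (A z y * \<xi> y))"
    by (simp add: sum_distrib_left)
  also have "\<dots> = (\<Sum>y\<in>B. \<Sum>z\<in>B. cnj (A z x) * (A z y * \<xi> y))"
    by (rule sum.swap)
  also have "\<dots> = op_apply (gram B A) \<xi> x"
    unfolding op_apply_supported_matrix[OF supported_matrix_gram[OF assms]]
    by (simp add: gram_def sum_distrib_right mult.assoc)
  finally show "op_apply (gram B A) \<xi> x = op_apply (adjoint A) (op_apply A \<xi>) x" ..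
qed

lemma l2inner_op_apply_gram:
  assumes "supported_matrix B A"
  shows "l2inner \<xi> (op_apply (gram B A) \<xi>) = complex_of_real ((l2norm (op_apply A \<xi>))\<^sup>2)"
proof -
  have B: "finite B" using assms unfolding supported_matrix_def by simp
  define w where "w = op_apply A \<xi>"
  have w: "w z = (\<Sum>x\<in>B. A z x * \<xi> x)" for z
    unfolding w_def op_apply_supported_matrix[OF assms] ..
  have "l2inner \<xi> (op_apply (gram B A) \<xi>) = (\<Sum>x\<in>B. cnj (\<xi> x) * op_apply (gram B A) \<xi> x)"
    by (rule l2inner_finite_supp[OF B supp_op_apply_supported_matrix[OF supported_matrix_gram[OF assms]]])
  also have "\<dots> = (\<Sum>x\<in>B. cnj (\<xi> x) * (\<Sum>z\<in>B. cnj (A z x) * w z))"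
    unfolding op_apply_gram[OF assms] w_def[symmetric]
      op_apply_supported_matrix[OF supported_matrix_adjoint[OF assms]]
    by (simp add: adjoint_def)
  also have "\<dots> = (\<Sum>x\<in>B. \<Sum>z\<in>B. cnj (\<xi> x) * (cnj (A z x) * w z))"
    by (simp add: sum_distrib_left)
  also have "\<dots> = (\<Sum>z\<in>B. \<Sum>x\<in>B. cnj (\<xi> x) * (cnj (A z x) * w z))"
    by (rule sum.swap)
  also have "\<dots> = (\<Sum>z\<in>B. cnj (w z) * w z)"
  proof (rule sum.cong[OF refl])
    fix z
    have "cnj (w z) = (\<Sum>x\<in>B. cnj (A z x) * cnj (\<xi> x))" unfolding w by simp
    then show "(\<Sum>x\<in>B. cnj (\<xi> x) * (cnj (A z x) * w z)) = cnj (w z) * w z"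
      by (simp add: sum_distrib_left sum_distrib_right mult_ac)
  qed
  also have "\<dots> = complex_of_real (sqnorm_on B w)"
    unfolding sqnorm_on_def of_real_sum by (intro sum.cong refl) (subst complex_norm_square, simp add: mult.commute)
  also have "\<dots> = complex_of_real ((l2norm w)\<^sup>2)"
    using l2norm_sq_finite_supp[OF B supp_op_apply_supported_matrix[OF assms]] w_def by simp
  finally show ?thesis unfolding w_def .
qed

lemma l2norm_op_apply_adjoint_le:
  assumes A: "supported_matrix B A" and contr: "\<And>\<xi>. l2 \<xi> \<Longrightarrow> l2norm (op_apply A \<xi>) \<le> l2norm \<xi>"
    and "l2 \<eta>"
  shows "l2norm (op_apply (adjoint A) \<eta>) \<le> l2norm \<eta>"
proof -
  have B: "finite B" using A unfolding supported_matrix_def by simp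
  define u where "u = op_apply (adjoint A) \<eta>"
  have su: "supp u \<subseteq> B" unfolding u_def by (rule supp_op_apply_supported_matrix[OF supported_matrix_adjoint[OF A]])
  have u: "u x = (\<Sum>z\<in>B. cnj (A z x) * \<eta> z)" for x
    unfolding u_def op_apply_supported_matrix[OF supported_matrix_adjoint[OF A]] by (simp add: adjoint_def)
  have "complex_of_real (sqnorm_on B u) = (\<Sum>x\<in>B. u x * cnj (u x))"
    by (simp only: sqnorm_on_def of_real_sum complex_norm_square)
  also have "\<dots> = (\<Sum>x\<in>B. \<Sum>z\<in>B. cnj (A z x) * \<eta> z * cnj (u x))"
    unfolding u by (simp add: sum_distrib_right)
  also have "\<dots> = (\<Sum>z\<in>B. \<Sum>x\<in>B. cnj (A z x) * \<eta> z * cnj (u x))"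
    by (rule sum.swap)
  also have "\<dots> = cnj (\<Sum>z\<in>B. cnj (\<eta> z) * op_apply A u z)"
    unfolding op_apply_supported_matrix[OF A] by (simp add: sum_distrib_left mult_ac)
  finally have "sqnorm_on B u = cmod (\<Sum>z\<in>B. cnj (\<eta> z) * op_apply A u z)"
    by (metis complex_mod_cnj norm_of_real abs_of_nonneg sqnorm_on_nonneg)
  also have "\<dots> \<le> l2norm \<eta> * l2norm (op_apply A u)"
    by (rule cauchy_schwarz_finite_supp[OF B supp_op_apply_supported_matrix[OF A] assms(3)])
  also have "\<dots> \<le> l2norm \<eta> * l2norm u"
    by (rule mult_left_mono[OF contr[OF l2_if_finite_supp[OF B su]] l2norm_nonneg])
  finally have "(l2norm u)\<^sup>2 \<le> l2norm \<eta> * l2norm u"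
    using l2norm_sq_finite_supp[OF B su] by simp
  then show ?thesis unfolding u_def[symmetric]
    using l2norm_nonneg[of u] l2norm_nonneg[of \<eta>]
    by (cases "l2norm u = 0") (auto simp: power2_eq_square)
qed

lemma normalized_gram:
  assumes A: "supported_matrix B A" and A_propagation: "propagation_le A R"
    and contr: "\<And>\<xi>. l2 \<xi> \<Longrightarrow> l2norm (op_apply A \<xi>) \<le> l2norm \<xi>"
    and unit: "l2 \<xi>1" "l2norm \<xi>1 = 1" and t: "0 < t" "t \<le> (l2norm (op_apply A \<xi>1))\<^sup>2"
    and shrink: "\<And>\<xi>. l2 \<xi> \<Longrightarrow> P (supp \<xi>) \<Longrightarrow> l2norm (op_apply A \<xi>) \<le> c * l2norm \<xi>"
    and c: "0 \<le> c"
  defines "K \<equiv> \<lambda>x y. gram B A x y / opnorm (gram B A)"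
  shows "K \<in> CR (2 * R)" "positive_op K" "opnorm K = 1" "supported_matrix B K"
    "\<And>\<xi>. l2 \<xi> \<Longrightarrow> l2norm \<xi> = 1 \<Longrightarrow> P (supp \<xi>) \<Longrightarrow> l2norm (op_apply K \<xi>) \<le> c / t"
proof -
  define C where "C = gram B A"
  define N where "N = opnorm C"
  have K: "K = (\<lambda>x y. C x y / N)" unfolding K_def C_def N_def ..
  have C: "supported_matrix B C" unfolding C_def by (rule supported_matrix_gram[OF A])
  have B: "finite B" using A by (simp add: supported_matrix_def)
  have C_le_A: "l2norm (op_apply C \<xi>) \<le> l2norm (op_apply A \<xi>)" for \<xi>
    unfolding C_def op_apply_gram[OF A]
    by (rule l2norm_op_apply_adjoint_le[OF A contr l2_op_apply_supported_matrix[OF A]])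
  have C_contr: "l2norm (op_apply C \<xi>) \<le> 1 * l2norm \<xi>" if "l2 \<xi>" for \<xi>
    using C_le_A[of \<xi>] contr[OF that] by simp
  have bounded_C: "bounded_op C" by (rule bounded_op_supported_matrix[OF C C_contr])
  have "t \<le> cmod (l2inner \<xi>1 (op_apply C \<xi>1))"
    using t(2) unfolding C_def l2inner_op_apply_gram[OF A] norm_of_real by simp
  also have "\<dots> \<le> l2norm \<xi>1 * l2norm (op_apply C \<xi>1)"
    unfolding l2inner_finite_supp[OF B supp_op_apply_supported_matrix[OF C]]
    by (rule cauchy_schwarz_finite_supp[OF B supp_op_apply_supported_matrix[OF C] unit(1)])
  also have "\<dots> \<le> N"
    using l2norm_op_apply_le_opnorm[OF bounded_C unit(1)] unit(2) unfolding N_def by simp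
  finally have tN: "t \<le> N" .
  then have N: "N > 0" using t(1) by linarith
  have K_apply: "op_apply K \<xi> = (\<lambda>x. op_apply C \<xi> x / N)" for \<xi>
    unfolding K by (rule op_apply_divide_matrix)
  have l2norm_K: "l2norm (op_apply K \<xi>) = l2norm (op_apply C \<xi>) / N" for \<xi>
    unfolding K_apply l2norm_divide using N by simp
  show supported_K: "supported_matrix B K" using C unfolding K supported_matrix_def by auto
  have bounded_K: "bounded_op K"
  proof (rule bounded_op_supported_matrix[OF supported_K, of "1/N"])
    fix \<xi> :: "'a \<Rightarrow> complex" assume "l2 \<xi>"
    then show "l2norm (op_apply K \<xi>) \<le> 1 / N * l2norm \<xi>"
      unfolding l2norm_K using C_contr N by (simp add: divide_right_mono)
  qed
  have "propagation_le K (2 * R)"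
    using propagation_le_gram[OF A_propagation, of B] unfolding K C_def propagation_le_def by auto
  then show "K \<in> CR (2 * R)" using bounded_K unfolding CR_def by simp
  show "positive_op K" unfolding positive_op_def
  proof (intro conjI bounded_K allI impI)
    fix \<xi> :: "'a \<Rightarrow> complex"
    have "l2inner \<xi> (op_apply K \<xi>) = l2inner \<xi> (op_apply C \<xi>) * (1 / complex_of_real N)"
      unfolding K_apply l2inner_def
      using infsum_cmult_left'[of "\<lambda>x. cnj (\<xi> x) * op_apply C \<xi> x" "1 / complex_of_real N" UNIV]
      by simp
    also have "\<dots> = complex_of_real ((l2norm (op_apply A \<xi>))\<^sup>2 / N)"
      unfolding C_def l2inner_op_apply_gram[OF A] by simp
    finally have "l2inner \<xi> (op_apply K \<xi>) = complex_of_real ((l2norm (op_apply A \<xi>))\<^sup>2 / N)" .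
    then show "Im (l2inner \<xi> (op_apply K \<xi>)) = 0" "0 \<le> Re (l2inner \<xi> (op_apply K \<xi>))"
      using N by simp_all
  qed
  show "opnorm K = 1" unfolding K N_def by (rule opnorm_divide_opnorm[OF bounded_C N[unfolded N_def]])
  fix \<xi> assume "l2 \<xi>" "l2norm \<xi> = 1" "P (supp \<xi>)"
  then have "l2norm (op_apply C \<xi>) \<le> c" using C_le_A[of \<xi>] shrink[of \<xi>] by simp
  then have "l2norm (op_apply K \<xi>) \<le> c / N" unfolding l2norm_K using N by (simp add: divide_right_mono)
  also have "\<dots> \<le> c / t" using tN t c by (simp add: frac_le)
  finally show "l2norm (op_apply K \<xi>) \<le> c / t" .
qed

definition compress :: "'a set \<Rightarrow> ('a \<Rightarrow> 'a \<Rightarrow> complex) \<Rightarrow> 'a \<Rightarrow> 'a \<Rightarrow> complex" where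
  "compress B T = (\<lambda>x y. if x \<in> B \<and> y \<in> B then T x y else 0)"

lemma supported_matrix_compress: "finite B \<Longrightarrow> supported_matrix B (compress B T)"
  unfolding supported_matrix_def compress_def by simp

lemma propagation_le_compress: "propagation_le T R \<Longrightarrow> propagation_le (compress B T) R"
  unfolding propagation_le_def compress_def by simp

lemma op_apply_compress:
  assumes B: "finite B"
  shows "op_apply (compress B T) \<xi> = restrict_vec B (op_apply T (restrict_vec B \<xi>))"
proof
  fix x
  have "op_apply T (restrict_vec B \<xi>) x = (\<Sum>y\<in>B. T x y * restrict_vec B \<xi> y)"
    by (simp add: op_apply_eq_sum[OF B] supp_restrict_vec)
  then show "op_apply (compress B T) \<xi> x = restrict_vec B (op_apply T (restrict_vec B \<xi>)) x"
    unfolding op_apply_supported_matrix[OF supported_matrix_compress[OF B]]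
    by (simp add: compress_def restrict_vec_def cong: sum.cong)
qed

lemma restrict_vec_restrict_vec: "restrict_vec U (restrict_vec W \<xi>) = restrict_vec (W \<inter> U) \<xi>"
  unfolding restrict_vec_def by auto

lemma op_apply_restrict_vec_eq:
  assumes "\<And>y. T x y \<noteq> 0 \<Longrightarrow> y \<in> W"
  shows "op_apply T (restrict_vec W \<xi>) x = op_apply T \<xi> x"
proof -
  have "(\<lambda>y. T x y * restrict_vec W \<xi> y) = (\<lambda>y. T x y * \<xi> y)"
    using assms unfolding restrict_vec_def by force
  then show ?thesis unfolding op_apply_def by simp
qed

section \<open>Neighbourhoods and finite propagation\<close>

definition nbhd :: "'a::metric_space set \<Rightarrow> real \<Rightarrow> 'a set" where
  "nbhd F r = {x. \<exists>f\<in>F. dist x f \<le> r}"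

lemma nbhd_mono: "r \<le> s \<Longrightarrow> nbhd F r \<subseteq> nbhd F s"
  unfolding nbhd_def by force

lemma subset_nbhd: "0 \<le> r \<Longrightarrow> F \<subseteq> nbhd F r"
  unfolding nbhd_def by force

lemma nbhd_step:
  assumes "x \<in> nbhd F r" "dist x y \<le> s"
  shows "y \<in> nbhd F (r + s)"
proof -
  obtain f where "f \<in> F" "dist x f \<le> r" using assms(1) unfolding nbhd_def by blast
  then show ?thesis using assms(2) dist_triangle3[of y f x] unfolding nbhd_def by force
qed

lemma diam_le_nbhd:
  assumes "\<And>f g. f \<in> F \<Longrightarrow> g \<in> F \<Longrightarrow> dist f g \<le> D"
  shows "diam_le (nbhd F r) (D + 2 * r)"
  unfolding diam_le_def
proof (intro ballI)
  fix x y assume "x \<in> nbhd F r" "y \<in> nbhd F r"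
  then obtain f g where "f \<in> F" "dist x f \<le> r" "g \<in> F" "dist y g \<le> r"
    unfolding nbhd_def by blast
  moreover have "dist x y \<le> dist x f + dist f g + dist g y"
    using dist_triangle[of x y f] dist_triangle[of f y g] by linarith
  ultimately show "dist x y \<le> D + 2 * r" using assms[of f g] by (simp add: dist_commute)
qed

lemma finite_nbhd:
  assumes "bounded_geometry TYPE('a::metric_space)" "finite (F :: 'a set)"
  shows "finite (nbhd F r)"
proof -
  have "finite (cball f (\<bar>r\<bar> + 1))" for f :: 'a
    using assms(1) unfolding bounded_geometry_def by (meson abs_ge_zero add_nonneg_pos zero_less_one)
  then have "finite (\<Union>f\<in>F. cball f (\<bar>r\<bar> + 1))" using assms(2) by blast
  moreover have "nbhd F r \<subseteq> (\<Union>f\<in>F. cball f (\<bar>r\<bar> + 1))"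
    unfolding nbhd_def cball_def by (force simp: dist_commute)
  ultimately show ?thesis by (rule finite_subset[rotated])
qed

lemma exists_small_increment:
  fixes f :: "nat \<Rightarrow> real"
  assumes "0 < M" "f M - f 0 \<le> 1"
  shows "\<exists>k<M. f (Suc k) - f k \<le> 1 / M"
proof (rule ccontr)
  assume "\<not> ?thesis"
  then have "1 / M < f (Suc k) - f k" if "k < M" for k using that by force
  then have "(\<Sum>k<M. 1 / real M) < (\<Sum>k<M. f (Suc k) - f k)"
    by (intro sum_strict_mono) (use assms(1) in auto)
  then show False using assms sum_lessThan_telescope[of f M] by simp
qed

locale norm_one_controlled =
  fixes T :: "'a::metric_space \<Rightarrow> 'a \<Rightarrow> complex" and R :: real
  assumes geometry: "bounded_geometry TYPE('a)"
    and R_nonneg: "0 \<le> R" and propagation: "propagation_le T R"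
    and bounded: "bounded_op T"
    and norm_one: "opnorm T = 1"
begin

lemma contraction: "l2 \<xi> \<Longrightarrow> l2norm (op_apply T \<xi>) \<le> l2norm \<xi>"
  using l2norm_op_apply_le_opnorm[OF bounded] norm_one by simp

lemma l2_op_apply: "l2 \<xi> \<Longrightarrow> l2 (op_apply T \<xi>)"
  using bounded unfolding bounded_op_def by blast

lemma dist_le_if_nonzero: "T x y \<noteq> 0 \<Longrightarrow> dist x y \<le> R"
  using propagation unfolding propagation_le_def by blast

lemma supp_op_apply_subset:
  assumes "finite G" "supp \<xi> \<subseteq> G"
  shows "supp (op_apply T \<xi>) \<subseteq> nbhd G R"
proof
  fix x assume "x \<in> supp (op_apply T \<xi>)"
  then have "(\<Sum>y\<in>G. T x y * \<xi> y) \<noteq> 0" using op_apply_eq_sum[OF assms, of T] by (simp add: supp_def)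
  then obtain y where "y \<in> G" "T x y * \<xi> y \<noteq> 0" by (meson sum.neutral)
  then show "x \<in> nbhd G R" unfolding nbhd_def using dist_le_if_nonzero[of x y] by auto
qed

lemma l2norm_op_apply_compress_le:
  assumes "finite B" "l2 \<xi>"
  shows "l2norm (op_apply (compress B T) \<xi>) \<le> l2norm (op_apply T (restrict_vec B \<xi>))"
  unfolding op_apply_compress[OF assms(1)]
  by (rule l2norm_restrict_vec_le[OF l2_op_apply[OF l2_restrict_vec[OF assms(1)]] assms(1)])

lemma exists_positive_operator_on_finite_set:
  assumes B: "finite B" and supp: "supp \<xi>0 \<subseteq> B" "supp (op_apply T \<xi>0) \<subseteq> B"
    and nonzero: "l2norm \<xi>0 > 0" and large: "t * (l2norm \<xi>0)\<^sup>2 \<le> (l2norm (op_apply T \<xi>0))\<^sup>2"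
    and t: "t > 0" and c: "c \<ge> 0"
    and shrink: "\<And>\<eta>. l2 \<eta> \<Longrightarrow> diam_le (supp \<eta>) S \<Longrightarrow> l2norm (op_apply T \<eta>) \<le> c * l2norm \<eta>"
  shows "\<exists>K. K \<in> CR (2 * R) \<and> positive_op K \<and> opnorm K = 1 \<and> supported_matrix B K \<and>
     (\<forall>\<xi>. l2 \<xi> \<and> l2norm \<xi> = 1 \<and> diam_le (supp \<xi>) S \<longrightarrow> l2norm (op_apply K \<xi>) \<le> c / t)"
proof -
  define A where "A = compress B T"
  have A: "supported_matrix B A" unfolding A_def by (rule supported_matrix_compress[OF B])
  have A_contr: "l2norm (op_apply A \<xi>) \<le> l2norm \<xi>" if "l2 \<xi>" for \<xi>
    using l2norm_op_apply_compress_le[OF B that] contraction[OF l2_restrict_vec[OF B], of \<xi>]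
      l2norm_restrict_vec_le[OF that B] unfolding A_def by linarith
  have A_shrink: "l2norm (op_apply A \<xi>) \<le> c * l2norm \<xi>" if "l2 \<xi>" "diam_le (supp \<xi>) S" for \<xi>
  proof -
    have "diam_le (supp (restrict_vec B \<xi>)) S"
      using that(2) by (rule diam_le_subset) (simp add: supp_restrict_vec)
    then have "l2norm (op_apply T (restrict_vec B \<xi>)) \<le> c * l2norm (restrict_vec B \<xi>)"
      using shrink l2_restrict_vec[OF B] by blast
    also have "\<dots> \<le> c * l2norm \<xi>" using mult_left_mono[OF l2norm_restrict_vec_le[OF that(1) B] c] .
    finally show ?thesis using l2norm_op_apply_compress_le[OF B that(1)] unfolding A_def by linarith
  qed
  define s where "s = l2norm \<xi>0"
  define \<xi>1 where "\<xi>1 = (\<lambda>x. \<xi>0 x / complex_of_real s)"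
  have "l2 \<xi>1" unfolding \<xi>1_def by (rule l2_divide[OF l2_if_finite_supp[OF B supp(1)]])
  moreover have "l2norm \<xi>1 = 1" unfolding \<xi>1_def l2norm_divide s_def using nonzero by simp
  moreover have "t \<le> (l2norm (op_apply A \<xi>1))\<^sup>2"
  proof -
    have "op_apply A \<xi>0 = op_apply T \<xi>0"
      unfolding A_def op_apply_compress[OF B] restrict_vec_eq_self[OF supp(1)] restrict_vec_eq_self[OF supp(2)] ..
    then have "(l2norm (op_apply A \<xi>1))\<^sup>2 = (l2norm (op_apply T \<xi>0))\<^sup>2 / s\<^sup>2"
      unfolding \<xi>1_def op_apply_divide l2norm_divide using nonzero s_def by (simp add: power_divide)
    then show ?thesis using large nonzero unfolding s_def by (simp add: pos_le_divide_eq)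
  qed
  ultimately show ?thesis
    using normalized_gram[OF A propagation_le_compress[OF propagation, of B, folded A_def] A_contr,
        of \<xi>1 t "\<lambda>X. diam_le X S" c] t c A_shrink
    unfolding A_def by blast
qed

lemma exists_finite_supp_almost_norming:
  assumes "r < 1"
  shows "\<exists>G \<zeta>. finite G \<and> supp \<zeta> \<subseteq> G \<and> l2norm \<zeta> \<le> 1 \<and> r \<le> (l2norm (op_apply T \<zeta>))\<^sup>2"
proof -
  define r' where "r' = max r 0"
  have "sqrt r' < Sup {l2norm (op_apply T \<xi>) |\<xi>. l2 \<xi> \<and> l2norm \<xi> \<le> 1}"
    using assms norm_one unfolding r'_def opnorm_def by (simp add: max_def)
  then obtain \<xi> where \<xi>: "l2 \<xi>" "l2norm \<xi> \<le> 1" "sqrt r' < l2norm (op_apply T \<xi>)"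
    using less_cSup_iff[OF opnorm_set_nonempty bdd_above_opnorm_set[OF bounded]] by auto
  define v where "v = op_apply T \<xi>"
  define s where "s = (\<Sum>\<^sub>\<infinity>x. (cmod (v x))\<^sup>2)"
  have "r' < s"
    using \<xi>(3) unfolding v_def[symmetric] l2norm_def s_def[symmetric] by (simp add: real_sqrt_less_iff)
  then obtain K where K: "finite K" "dist (\<Sum>x\<in>K. (cmod (v x))\<^sup>2) s \<le> (s - r') / 2"
    using infsum_finite_approximation[OF l2_op_apply[OF \<xi>(1), folded v_def, unfolded l2_def], of "(s - r') / 2"]
    unfolding s_def by auto
  then have K_large: "r' < sqnorm_on K v"
    using abs_le_D2[OF K(2)[unfolded dist_real_def]] \<open>r' < s\<close> unfolding sqnorm_on_def by argo
  define G where "G = nbhd K R"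
  define \<zeta> where "\<zeta> = restrict_vec G \<xi>"
  have G: "finite G" unfolding G_def by (rule finite_nbhd[OF geometry K(1)])
  have \<zeta>: "supp \<zeta> \<subseteq> G" "l2norm \<zeta> \<le> 1"
    using l2norm_restrict_vec_le[OF \<xi>(1) G] \<xi>(2) unfolding \<zeta>_def supp_restrict_vec by auto
  have "op_apply T \<zeta> x = v x" if "x \<in> K" for x
    unfolding \<zeta>_def v_def
    by (rule op_apply_restrict_vec_eq) (use that dist_le_if_nonzero in \<open>force simp: G_def nbhd_def dist_commute\<close>)
  then have "sqnorm_on K v = sqnorm_on K (op_apply T \<zeta>)" unfolding sqnorm_on_def by simp
  also have "\<dots> \<le> (l2norm (op_apply T \<zeta>))\<^sup>2"
    by (rule sqnorm_on_le_l2norm_sq[OF l2_op_apply[OF l2_if_finite_supp[OF G \<zeta>(1)]] K(1)])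
  finally show ?thesis using K_large G \<zeta> unfolding r'_def by (intro exI[of _ G] exI[of _ \<zeta>]) auto
qed

lemma sqnorm_on_op_apply_restrict_vec_le:
  assumes "finite G" "supp \<zeta> \<subseteq> G" "finite V"
  shows "sqnorm_on V (op_apply T (restrict_vec U \<zeta>)) \<le> sqnorm_on (G \<inter> U) \<zeta>"
proof -
  have supp_U: "supp (restrict_vec U \<zeta>) \<subseteq> G" using assms(2) by (auto simp: supp_restrict_vec)
  have l2_U: "l2 (restrict_vec U \<zeta>)" by (rule l2_if_finite_supp[OF assms(1) supp_U])
  have "sqnorm_on V (op_apply T (restrict_vec U \<zeta>)) \<le> (l2norm (op_apply T (restrict_vec U \<zeta>)))\<^sup>2"
    by (rule sqnorm_on_le_l2norm_sq[OF l2_op_apply[OF l2_U] assms(3)])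
  also have "\<dots> \<le> (l2norm (restrict_vec U \<zeta>))\<^sup>2"
    by (rule power_mono[OF contraction[OF l2_U] l2norm_nonneg])
  also have "\<dots> = sqnorm_on (G \<inter> U) \<zeta>"
    using l2norm_sq_finite_supp[OF assms(1) supp_U] sqnorm_on_restrict_vec[OF assms(1)] by simp
  finally show ?thesis .
qed

text \<open>Cutting \<zeta> along W costs at most the mass of \<zeta> within distance 2R of the boundary of W:
  only there do T of the two pieces overlap.\<close>
lemma l2norm_sq_op_apply_split:
  fixes W :: "'a set"
  assumes G: "finite G" "supp \<zeta> \<subseteq> G"
  defines "N \<equiv> nbhd (nbhd W R \<inter> nbhd (- W) R) R"
  shows "(l2norm (op_apply T \<zeta>))\<^sup>2 \<le> (l2norm (op_apply T (restrict_vec W \<zeta>)))\<^sup>2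
           + (l2norm (op_apply T (restrict_vec (- W) \<zeta>)))\<^sup>2 + sqnorm_on (G \<inter> N) \<zeta>"
proof -
  define a where "a = op_apply T (restrict_vec W \<zeta>)"
  define b where "b = op_apply T (restrict_vec (- W) \<zeta>)"
  define Z where "Z = nbhd W R \<inter> nbhd (- W) R"
  define V where "V = nbhd G R"
  have V: "finite V" unfolding V_def by (rule finite_nbhd[OF geometry G(1)])
  have supp_piece: "supp (restrict_vec U \<zeta>) \<subseteq> G \<inter> U" for U
    using G(2) by (auto simp: supp_restrict_vec)
  have supp_T_piece: "supp (op_apply T (restrict_vec U \<zeta>)) \<subseteq> V \<inter> nbhd U R" for U
  proof -
    have "supp (op_apply T (restrict_vec U \<zeta>)) \<subseteq> nbhd (G \<inter> U) R"
      using supp_op_apply_subset[OF _ supp_piece] G(1) by blast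
    then show ?thesis unfolding V_def nbhd_def by blast
  qed
  have sum_ab: "op_apply T \<zeta> x = a x + b x" for x
  proof -
    have "op_apply T \<zeta> x = (\<Sum>y\<in>G. T x y * restrict_vec W \<zeta> y + T x y * restrict_vec (- W) \<zeta> y)"
      unfolding op_apply_eq_sum[OF G] by (intro sum.cong refl) (simp add: restrict_vec_def)
    then show ?thesis
      using supp_piece unfolding a_def b_def sum.distrib
      by (simp add: op_apply_eq_sum[OF G(1)])
  qed
  have "a x = 0 \<or> b x = 0" if "x \<notin> Z" for x
    using that supp_T_piece[of W] supp_T_piece[of "- W"] unfolding Z_def a_def b_def supp_def by blast
  then have "sqnorm_on V (op_apply T \<zeta>) \<le> sqnorm_on V a + sqnorm_on V b + (sqnorm_on (V \<inter> Z) a + sqnorm_on (V \<inter> Z) b)"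
    unfolding sum_ab by (intro sqnorm_on_add_le[OF V]) blast
  also have "sqnorm_on (V \<inter> Z) a + sqnorm_on (V \<inter> Z) b \<le> sqnorm_on (G \<inter> N) \<zeta>"
  proof -
    have local: "op_apply T (restrict_vec U \<zeta>) x = op_apply T (restrict_vec (U \<inter> N) \<zeta>) x" if "x \<in> Z" for U x
    proof -
      have "y \<in> N" if "T x y \<noteq> 0" for y
        using \<open>x \<in> Z\<close> dist_le_if_nonzero[OF that] unfolding N_def Z_def nbhd_def
        by (force simp: dist_commute)
      then show ?thesis
        using op_apply_restrict_vec_eq[of T x N "restrict_vec U \<zeta>"] by (simp add: restrict_vec_restrict_vec)
    qed
    have piece: "sqnorm_on (V \<inter> Z) (op_apply T (restrict_vec U \<zeta>)) \<le> sqnorm_on (G \<inter> (U \<inter> N)) \<zeta>" for U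
      using sqnorm_on_op_apply_restrict_vec_le[OF G, of "V \<inter> Z" "U \<inter> N"] V local[of _ U]
      unfolding sqnorm_on_def by simp
    have "sqnorm_on (V \<inter> Z) a + sqnorm_on (V \<inter> Z) b
        \<le> sqnorm_on (G \<inter> (W \<inter> N)) \<zeta> + sqnorm_on (G \<inter> (- W \<inter> N)) \<zeta>"
      unfolding a_def b_def by (rule add_mono[OF piece piece])
    also have "\<dots> = sqnorm_on (G \<inter> N \<inter> W) \<zeta> + sqnorm_on (G \<inter> N - W) \<zeta>"
      by (rule arg_cong2[where f = "\<lambda>A B. sqnorm_on A \<zeta> + sqnorm_on B \<zeta>"]) auto
    also have "\<dots> = sqnorm_on (G \<inter> N) \<zeta>"
      unfolding sqnorm_on_def by (rule sum.Int_Diff[symmetric]) (use G(1) in simp)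
    finally show ?thesis .
  qed
  finally have "sqnorm_on V (op_apply T \<zeta>) \<le> sqnorm_on V a + sqnorm_on V b + sqnorm_on (G \<inter> N) \<zeta>"
    by simp
  moreover have "supp (op_apply T \<zeta>) \<subseteq> V" unfolding V_def by (rule supp_op_apply_subset[OF G])
  ultimately show ?thesis
    using supp_T_piece[of W] supp_T_piece[of "- W"] V unfolding a_def b_def
    by (simp add: l2norm_sq_finite_supp)
qed

lemma exists_vector_avoiding:
  fixes F :: "'a set" and M :: nat
  assumes F: "finite F" and D: "\<And>f g. f \<in> F \<Longrightarrow> g \<in> F \<Longrightarrow> dist f g \<le> D"
    and M: "0 < M" and S: "D + 8 * real M * (R + 1) \<le> S"
    and shrink: "\<And>\<eta>. l2 \<eta> \<Longrightarrow> diam_le (supp \<eta>) S \<Longrightarrow> l2norm (op_apply T \<eta>) \<le> c * l2norm \<eta>"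
    and c: "0 \<le> c" "c\<^sup>2 < t"
    and \<zeta>: "finite G" "supp \<zeta> \<subseteq> G" "l2norm \<zeta> \<le> 1"
    and large: "t + 1 / M \<le> (l2norm (op_apply T \<zeta>))\<^sup>2"
  shows "\<exists>B \<xi>0. finite B \<and> B \<inter> F = {} \<and> supp \<xi>0 \<subseteq> B \<and> supp (op_apply T \<xi>0) \<subseteq> B \<and>
           0 < l2norm \<xi>0 \<and> t * (l2norm \<xi>0)\<^sup>2 \<le> (l2norm (op_apply T \<xi>0))\<^sup>2"
proof -
  define w where "w = R + 1"
  define I where "I n = nbhd F (real n * w)" for n :: nat
  define \<mu> where "\<mu> n = sqnorm_on (G \<inter> I n) \<zeta>" for n
  have w: "0 < w" "R \<le> w" using R_nonneg by (simp_all add: w_def)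
  have I_mono: "I m \<subseteq> I n" if "m \<le> n" for m n
    unfolding I_def by (rule nbhd_mono) (use w that in simp)
  have I_step: "y \<in> I (Suc n)" if "x \<in> I n" "dist x y \<le> R" for x y n
    using nbhd_step[OF that[unfolded I_def]] nbhd_mono[of "real n * w + R" "real (Suc n) * w" F] w
    unfolding I_def by (auto simp: algebra_simps)
  have mass: "sqnorm_on G \<zeta> \<le> 1"
    using l2norm_sq_finite_supp[OF \<zeta>(1,2)] \<zeta>(3) l2norm_nonneg[of \<zeta>] by (metis power_le_one)
  have "\<mu> (4 * M) - \<mu> 0 \<le> 1"
    using sqnorm_on_mono[OF \<zeta>(1), of "G \<inter> I (4 * M)" \<zeta>] sqnorm_on_nonneg[of "G \<inter> I 0" \<zeta>] mass
    unfolding \<mu>_def by simp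
  then obtain k where k: "k < M" "\<mu> (4 * k + 4) - \<mu> (4 * k) \<le> 1 / M"
    using exists_small_increment[of M "\<lambda>k. \<mu> (4 * k)"] M by (auto simp: add.commute)
  define W where "W = I (4 * k + 2)"
  define \<xi>0 where "\<xi>0 = restrict_vec (- W) \<zeta>"
  define N where "N = nbhd (nbhd W R \<inter> nbhd (- W) R) R"
  have "N \<subseteq> I (4 * k + 4) - I (4 * k)"
  proof
    fix x assume "x \<in> N"
    then obtain z y y' where z: "dist x z \<le> R" "dist z y \<le> R" "y \<in> W" "dist z y' \<le> R" "y' \<notin> W"
      unfolding N_def nbhd_def by blast
    have "x \<in> I (4 * k + 4)"
      using I_step[OF I_step[OF _ z(2)[unfolded dist_commute[of z]]] z(1)[unfolded dist_commute[of x]]] z(3)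
      unfolding W_def by (simp add: numeral_eq_Suc)
    moreover have "x \<notin> I (4 * k)"
      using I_step[OF I_step[OF _ z(1)] z(4)] z(5) unfolding W_def by (auto simp: numeral_eq_Suc)
    ultimately show "x \<in> I (4 * k + 4) - I (4 * k)" by blast
  qed
  then have "sqnorm_on (G \<inter> N) \<zeta> \<le> sqnorm_on (G \<inter> I (4 * k + 4) - G \<inter> I (4 * k)) \<zeta>"
    by (intro sqnorm_on_mono) (use \<zeta>(1) in auto)
  also have "\<dots> \<le> 1 / M"
    using k(2) I_mono[of "4 * k" "4 * k + 4"] \<zeta>(1) unfolding \<mu>_def by (subst sqnorm_on_diff) auto
  finally have cut: "(l2norm (op_apply T \<zeta>))\<^sup>2 \<le> (l2norm (op_apply T (restrict_vec W \<zeta>)))\<^sup>2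
      + (l2norm (op_apply T \<xi>0))\<^sup>2 + 1 / M"
    using l2norm_sq_op_apply_split[OF \<zeta>(1,2), of W] unfolding \<xi>0_def N_def by linarith
  define \<alpha> where "\<alpha> = sqnorm_on (G \<inter> W) \<zeta>"
  have supp_inner: "supp (restrict_vec W \<zeta>) \<subseteq> G" and supp_outer: "supp \<xi>0 \<subseteq> G - W"
    using \<zeta>(2) unfolding \<xi>0_def by (auto simp: supp_restrict_vec)
  have G_outer: "finite (G - W)" using \<zeta>(1) by simp
  have "diam_le W S" unfolding W_def I_def
  proof (rule diam_le_mono[OF diam_le_nbhd[OF D]])
    have "real (4 * k + 2) * w \<le> real (4 * M) * w" using k(1) w by (intro mult_right_mono) auto
    then show "D + 2 * (real (4 * k + 2) * w) \<le> S" using S unfolding w_def by simp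
  qed
  then have "l2norm (op_apply T (restrict_vec W \<zeta>)) \<le> c * l2norm (restrict_vec W \<zeta>)"
    by (intro shrink l2_if_finite_supp[OF \<zeta>(1) supp_inner]) (auto intro: diam_le_subset simp: supp_restrict_vec)
  then have "(l2norm (op_apply T (restrict_vec W \<zeta>)))\<^sup>2 \<le> (c * l2norm (restrict_vec W \<zeta>))\<^sup>2"
    by (rule power_mono[OF _ l2norm_nonneg])
  also have "\<dots> = c\<^sup>2 * \<alpha>"
    unfolding power_mult_distrib \<alpha>_def l2norm_sq_finite_supp[OF \<zeta>(1) supp_inner] sqnorm_on_restrict_vec[OF \<zeta>(1)] ..
  finally have inner: "(l2norm (op_apply T (restrict_vec W \<zeta>)))\<^sup>2 \<le> c\<^sup>2 * \<alpha>" .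
  have outer: "(l2norm \<xi>0)\<^sup>2 = sqnorm_on (G - W) \<zeta>"
    using l2norm_sq_finite_supp[OF G_outer supp_outer] sqnorm_on_restrict_vec[OF G_outer]
    unfolding \<xi>0_def by (simp add: Diff_eq)
  have "\<alpha> + (l2norm \<xi>0)\<^sup>2 = sqnorm_on G \<zeta>"
    unfolding \<alpha>_def outer sqnorm_on_def by (rule sum.Int_Diff[symmetric, OF \<zeta>(1)])
  then have \<alpha>: "\<alpha> + (l2norm \<xi>0)\<^sup>2 \<le> 1" "0 \<le> \<alpha>" "\<alpha> \<le> 1"
    using mass sqnorm_on_nonneg[of "G \<inter> W" \<zeta>] zero_le_power2[of "l2norm \<xi>0"]
    unfolding \<alpha>_def by linarith+
  have "c\<^sup>2 * \<alpha> \<le> t * \<alpha>" using c(2) \<alpha>(2) by (intro mult_right_mono) auto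
  moreover have "c\<^sup>2 * \<alpha> < t" using mult_left_le[OF \<alpha>(3) zero_le_power2[of c]] c(2) by linarith
  moreover have "t * (l2norm \<xi>0)\<^sup>2 \<le> t - t * \<alpha>"
    using mult_left_mono[of "(l2norm \<xi>0)\<^sup>2" "1 - \<alpha>" t] \<alpha>(1) c(2) zero_le_power2[of c]
    by (simp add: right_diff_distrib)
  ultimately have gain: "t * (l2norm \<xi>0)\<^sup>2 \<le> (l2norm (op_apply T \<xi>0))\<^sup>2" "0 < (l2norm (op_apply T \<xi>0))\<^sup>2"
    using cut inner large by linarith+
  have "l2norm (op_apply T \<xi>0) \<noteq> 0" using gain(2) by auto
  then have "0 < l2norm \<xi>0"
    using contraction[OF l2_if_finite_supp[OF G_outer supp_outer]] l2norm_nonneg[of "op_apply T \<xi>0"]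
    by linarith
  define B where "B = nbhd (G - W) R"
  have "y \<in> W" if "x \<in> F" "dist x y \<le> R" for x y
  proof -
    have "x \<in> I 0" using that(1) subset_nbhd[of 0 F] unfolding I_def by auto
    then show "y \<in> W" using I_step[OF _ that(2)] I_mono[of 1 "4 * k + 2"] unfolding W_def by auto
  qed
  then have "B \<inter> F = {}" unfolding B_def nbhd_def by (auto simp: dist_commute)
  moreover have "supp \<xi>0 \<subseteq> B" using supp_outer subset_nbhd[OF R_nonneg] unfolding B_def by blast
  moreover have "supp (op_apply T \<xi>0) \<subseteq> B" unfolding B_def by (rule supp_op_apply_subset[OF G_outer supp_outer])
  moreover have "finite B" unfolding B_def by (rule finite_nbhd[OF geometry G_outer])
  ultimately show ?thesis using \<open>0 < l2norm \<xi>0\<close> gain(1) by blast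
qed

end

section \<open>The localized operators\<close>

lemma exists_localized_positive_operator:
  fixes F :: "'a::metric_space set"
  assumes geometry: "bounded_geometry TYPE('a)" and R: "0 \<le> R" and c: "0 < c" "c < 1"
    and not_localized: "\<And>S. 0 < S \<Longrightarrow> \<exists>T::'a \<Rightarrow> 'a \<Rightarrow> complex. T \<in> CR R \<and> opnorm T = 1 \<and>
       (\<forall>\<xi>. l2 \<xi> \<and> l2norm \<xi> = 1 \<and> diam_le (supp \<xi>) S \<longrightarrow> l2norm (op_apply T \<xi>) < c)"
    and F: "finite F" and S: "0 < S"
  shows "\<exists>B K. finite B \<and> B \<inter> F = {} \<and> K \<in> CR (2 * R) \<and> positive_op K \<and> opnorm K = 1 \<and>
     supported_matrix B K \<and>
     (\<forall>\<xi>. l2 \<xi> \<and> l2norm \<xi> = 1 \<and> diam_le (supp \<xi>) S \<longrightarrow> l2norm (op_apply K \<xi>) \<le> 2 * c / (1 + c))"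
proof -
  define t where "t = (1 + c) / 2"
  define M :: nat where "M = nat \<lceil>2 / (1 - c)\<rceil> + 1"
  define D where "D = (\<Sum>f\<in>F. \<Sum>g\<in>F. dist f g)"
  define S' where "S' = S + D + 8 * real M * (R + 1)"
  have D: "dist f g \<le> D" if "f \<in> F" "g \<in> F" for f g
  proof -
    have "dist f g \<le> (\<Sum>g\<in>F. dist f g)" by (rule member_le_sum) (use that F in auto)
    also have "\<dots> \<le> D" unfolding D_def
      by (rule member_le_sum[where f = "\<lambda>f. \<Sum>g\<in>F. dist f g"]) (use that F in \<open>auto intro: sum_nonneg\<close>)
    finally show ?thesis .
  qed
  have "0 \<le> D" unfolding D_def by (intro sum_nonneg) auto
  moreover have "0 \<le> 8 * real M * (R + 1)" using R by simp
  ultimately have S': "0 < S'" "S \<le> S'" "D + 8 * real M * (R + 1) \<le> S'"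
    using S unfolding S'_def by linarith+
  obtain T :: "'a \<Rightarrow> 'a \<Rightarrow> complex" where T: "T \<in> CR R" "opnorm T = 1"
    and T_small: "\<And>\<xi>. l2 \<xi> \<and> l2norm \<xi> = 1 \<and> diam_le (supp \<xi>) S' \<longrightarrow> l2norm (op_apply T \<xi>) < c"
    using not_localized[OF S'(1)] by blast
  interpret norm_one_controlled T R
    by unfold_locales (use geometry R T in \<open>auto simp: CR_def\<close>)
  have shrink: "l2norm (op_apply T \<eta>) \<le> c * l2norm \<eta>" if "l2 \<eta>" "diam_le (supp \<eta>) S'" for \<eta>
    using l2norm_op_apply_le_if_unit[OF bounded that(1), of "\<lambda>X. diam_le X S'"] that(2) T_small
    by force
  have "2 / (1 - c) < real M" unfolding M_def by linarith
  then have "2 < real M * (1 - c)" using c by (simp add: divide_less_eq)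
  moreover have "0 < real M" unfolding M_def by simp
  ultimately have "1 / real M < (1 - c) / 2" by (simp add: field_simps)
  then have "t + 1 / M < 1" unfolding t_def by argo
  then obtain G \<zeta> where \<zeta>: "finite G" "supp \<zeta> \<subseteq> G" "l2norm \<zeta> \<le> 1"
    and large: "t + 1 / M \<le> (l2norm (op_apply T \<zeta>))\<^sup>2"
    using exists_finite_supp_almost_norming by blast
  have "c * c < c" using mult_strict_left_mono[OF c(2) c(1)] by simp
  then have "c\<^sup>2 < t" using c unfolding t_def power2_eq_square by argo
  moreover have "0 < M" unfolding M_def by simp
  ultimately obtain B \<xi>0 where B: "finite B" "B \<inter> F = {}" "supp \<xi>0 \<subseteq> B" "supp (op_apply T \<xi>0) \<subseteq> B"
      "0 < l2norm \<xi>0" "t * (l2norm \<xi>0)\<^sup>2 \<le> (l2norm (op_apply T \<xi>0))\<^sup>2"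
    using exists_vector_avoiding[OF F D _ S'(3) shrink less_imp_le[OF c(1)] _ \<zeta> large] by blast
  have t: "0 < t" "c / t = 2 * c / (1 + c)" using c unfolding t_def by auto
  then obtain K where K: "K \<in> CR (2 * R)" "positive_op K" "opnorm K = 1" "supported_matrix B K"
    and K_small: "\<And>\<xi>. l2 \<xi> \<and> l2norm \<xi> = 1 \<and> diam_le (supp \<xi>) S' \<longrightarrow> l2norm (op_apply K \<xi>) \<le> c / t"
    using exists_positive_operator_on_finite_set[OF B(1,3,4,5,6) t(1) less_imp_le[OF c(1)] shrink] by blast
  show ?thesis
    using B(1,2) K K_small diam_le_mono[OF _ S'(2)] unfolding t(2)
    by (intro exI[of _ B] exI[of _ K]) blast
qed

lemma exists_disjoint_sequence:
  fixes P :: "nat \<Rightarrow> 'a set \<Rightarrow> 'b \<Rightarrow> bool"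
  assumes "\<And>F n. finite F \<Longrightarrow> \<exists>B x. finite B \<and> B \<inter> F = {} \<and> P n B x"
  shows "\<exists>B x. (\<forall>n. finite (B n) \<and> P n (B n) (x n)) \<and> (\<forall>n m. n \<noteq> m \<longrightarrow> B n \<inter> B m = {})"
proof -
  have "\<forall>Fn. \<exists>p. finite (fst Fn) \<longrightarrow> finite (fst p) \<and> fst p \<inter> fst Fn = {} \<and> P (snd Fn) (fst p) (snd p)"
    using assms by fastforce
  then obtain g where g: "\<And>F n. finite F \<Longrightarrow>
      finite (fst (g (F, n))) \<and> fst (g (F, n)) \<inter> F = {} \<and> P n (fst (g (F, n))) (snd (g (F, n)))"
    by (metis choice fst_conv snd_conv)
  \<comment> \<open>U n is the union of the sets chosen before step n\<close>
  define U where "U = rec_nat {} (\<lambda>n U. U \<union> fst (g (U, n)))"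
  define B where "B n = fst (g (U n, n))" for n
  define x where "x n = snd (g (U n, n))" for n
  have U_0: "U 0 = {}" and U_Suc: "U (Suc n) = U n \<union> B n" for n
    unfolding U_def B_def by simp_all
  have finite_U: "finite (U n)" for n
  proof (induction n)
    case (Suc n)
    then show ?case using g[OF Suc] unfolding U_Suc B_def by simp
  qed (simp add: U_0)
  have B: "finite (B n) \<and> B n \<inter> U n = {} \<and> P n (B n) (x n)" for n
    unfolding B_def x_def by (rule g[OF finite_U])
  have "B m \<subseteq> U n" if "m < n" for m n
    using that by (induction n) (auto simp: U_Suc less_Suc_eq)
  then have "B n \<inter> B m = {}" if "m < n" for m n using B[of n] that by blast
  then have "B n \<inter> B m = {}" if "n \<noteq> m" for n m
    using that by (metis inf_commute linorder_neqE_nat)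
  then show ?thesis using B by blast
qed

theorem lemma4p2:
  assumes "bounded_geometry TYPE('a::metric_space)"
    and "\<not> ONL TYPE('a)"
  shows "\<exists>(R::real) (\<kappa>::real) (T::nat \<Rightarrow> 'a \<Rightarrow> 'a \<Rightarrow> complex) (B::nat \<Rightarrow> 'a set) (S::nat \<Rightarrow> real).
           R > 0 \<and> \<kappa> < 1 \<and>
           (\<forall>n. T n \<in> CR R) \<and> (\<forall>n. finite (B n)) \<and> (\<forall>n. S n > 0) \<and>
           strict_mono S \<and> filterlim S at_top sequentially \<and>
           (\<forall>n. positive_op (T n) \<and> opnorm (T n) = 1) \<and>
           (\<forall>n m. n \<noteq> m \<longrightarrow> B n \<inter> B m = {}) \<and>
           (\<forall>n \<xi>. l2 \<xi> \<longrightarrow>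
              op_apply (proj (B n)) (op_apply (T n) (op_apply (proj (B n)) \<xi>)) = op_apply (T n) \<xi>) \<and>
           (\<forall>n \<xi>. l2 \<xi> \<and> l2norm \<xi> = 1 \<and> diam_le (supp \<xi>) (S n) \<longrightarrow>
              l2norm (op_apply (T n) \<xi>) \<le> \<kappa>)"
proof -
  obtain R c where R: "0 \<le> R" and c: "0 < c" "c < 1"
    and not_localized: "\<And>S. 0 < S \<Longrightarrow> \<exists>T::'a \<Rightarrow> 'a \<Rightarrow> complex. T \<in> CR R \<and> opnorm T = 1 \<and>
       (\<forall>\<xi>. l2 \<xi> \<and> l2norm \<xi> = 1 \<and> diam_le (supp \<xi>) S \<longrightarrow> l2norm (op_apply T \<xi>) < c)"
    using assms(2) unfolding ONL_def not_le[symmetric] by meson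
  define S :: "nat \<Rightarrow> real" where "S n = real (Suc n)" for n
  have S_pos: "0 < S n" for n unfolding S_def by simp
  define Q where "Q n B K \<longleftrightarrow> K \<in> CR (2 * R) \<and> positive_op K \<and> opnorm K = 1 \<and>
      supported_matrix B K \<and> (\<forall>\<xi>. l2 \<xi> \<and> l2norm \<xi> = 1 \<and> diam_le (supp \<xi>) (S n) \<longrightarrow>
        l2norm (op_apply K \<xi>) \<le> 2 * c / (1 + c))" for n and B :: "'a set" and K
  have "\<exists>B K. finite B \<and> B \<inter> F = {} \<and> Q n B K" if "finite F" for F n
    unfolding Q_def by (rule exists_localized_positive_operator[OF assms(1) R c not_localized that S_pos])
  then obtain B K where B: "\<forall>n. finite (B n) \<and> Q n (B n) (K n)" "\<forall>n m. n \<noteq> m \<longrightarrow> B n \<inter> B m = {}"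
    using exists_disjoint_sequence[of Q] by blast
  have S_mono: "strict_mono S" "filterlim S at_top sequentially"
    unfolding S_def strict_mono_def
    by (simp, rule filterlim_compose[OF filterlim_real_sequentially filterlim_Suc])
  have K_CR: "K n \<in> CR (2 * R + 1)" for n
    using B(1) CR_mono[of "2 * R" "2 * R + 1"] unfolding Q_def by auto
  have K_proj: "op_apply (proj (B n)) (op_apply (K n) (op_apply (proj (B n)) \<xi>)) = op_apply (K n) \<xi>" for n \<xi>
    using B(1) proj_compression_supported_matrix unfolding Q_def by blast
  have \<kappa>: "2 * c / (1 + c) < 1" using c by simp
  show ?thesis
    by (rule exI[of _ "2 * R + 1"], rule exI[of _ "2 * c / (1 + c)"], rule exI[of _ K], rule exI[of _ B],
        rule exI[of _ S]) (use R B S_pos S_mono K_CR K_proj \<kappa> in \<open>auto simp: Q_def\<close>)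
qed

end
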